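(* Let $P$ be a simplicial polyhedron of genus zero. Then the lattice graph of $P$ contains a facet cycle.
   Context: A simplicial polyhedron is a polyhedron in $\mathbb{R}^3$ all of whose faces (facets) are triangles. The lattice graph $G$ of $P$ has one node for each facet, each edge and each vertex of $P$, with an arc for each incidence between these faces. A facet path in $G$ is a path that alternates between vertex nodes and facet nodes, includes each facet exactly once, and never repeats the same vertex twice in a row; thus in a subpath $(\ldots, v_1, f, v_2, \ldots)$, $v_1$ and $v_2$ are distinct vertices of the facet $f$. A facet cycle is a facet path that is also a cycle (closed). *)

theory Defs
  imports Main
begin

text \<open>A simplicial polyhedron is represented combinatorially by its set of facets
  F, each facet being the 3-element set of its vertices.\<close>

definition poly_vertices :: "'a set set \<Rightarrow> 'a set" where
  "poly_vertices F = \<Union>F"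

definition poly_edges :: "'a set set \<Rightarrow> 'a set set" where
  "poly_edges F = {e. card e = 2 \<and> (\<exists>f\<in>F. e \<subseteq> f)}"

definition facet_adj :: "'a set set \<Rightarrow> ('a set \<times> 'a set) set" where
  "facet_adj F = {(f, g). f \<in> F \<and> g \<in> F \<and> card (f \<inter> g) = 2}"

definition vertex_star_adj :: "'a set set \<Rightarrow> 'a \<Rightarrow> ('a set \<times> 'a set) set" where
  "vertex_star_adj F v = {(f, g). f \<in> F \<and> g \<in> F \<and> v \<in> f \<and> v \<in> g \<and> card (f \<inter> g) = 2}"

text \<open>A closed connected triangulated surface (closed 2-manifold whose faces are triangles):
  every edge lies in exactly two facets, the link of every vertex is connected
  (hence a single cycle), and the surface is connected.\<close>
definition simplicial_surface :: "'a set set \<Rightarrow> bool" where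
  "simplicial_surface F \<longleftrightarrow>
     finite F \<and> F \<noteq> {} \<and>
     (\<forall>f\<in>F. card f = 3) \<and>
     (\<forall>e\<in>poly_edges F. card {f\<in>F. e \<subseteq> f} = 2) \<and>
     (\<forall>v\<in>poly_vertices F. \<forall>f\<in>F. \<forall>g\<in>F. v \<in> f \<longrightarrow> v \<in> g \<longrightarrow>
          (f, g) \<in> (vertex_star_adj F v)\<^sup>*) \<and>
     (\<forall>f\<in>F. \<forall>g\<in>F. (f, g) \<in> (facet_adj F)\<^sup>*)"

definition euler_char :: "'a set set \<Rightarrow> int" where
  "euler_char F = int (card (poly_vertices F)) - int (card (poly_edges F)) + int (card F)"

text \<open>Genus zero: for a closed connected surface, Euler characteristic 2 - 2g = 2.\<close>
definition simplicial_polyhedron_genus0 :: "'a set set \<Rightarrow> bool" where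
  "simplicial_polyhedron_genus0 F \<longleftrightarrow> simplicial_surface F \<and> euler_char F = 2"

text \<open>Lattice graph: nodes are the faces (vertex v as the singleton {v}, edges, facets);
  arcs are the incidences (proper containment).\<close>
definition lattice_nodes :: "'a set set \<Rightarrow> 'a set set" where
  "lattice_nodes F = (\<lambda>v. {v}) ` poly_vertices F \<union> poly_edges F \<union> F"

definition lattice_arc :: "'a set set \<Rightarrow> 'a set \<Rightarrow> 'a set \<Rightarrow> bool" where
  "lattice_arc F x y \<longleftrightarrow> x \<in> lattice_nodes F \<and> y \<in> lattice_nodes F \<and>
     (x \<subset> y \<or> y \<subset> x)"

definition is_vertex_node :: "'a set set \<Rightarrow> 'a set \<Rightarrow> bool" where
  "is_vertex_node F x \<longleftrightarrow> (\<exists>v\<in>poly_vertices F. x = {v})"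

text \<open>A facet cycle: a closed walk w_0 w_1 ... w_(2n-1) (w_(2n) = w_0) in the lattice graph,
  alternating vertex nodes (even positions) and facet nodes (odd positions),
  containing every facet exactly once, and with the two vertices around each facet distinct.\<close>
definition facet_cycle :: "'a set set \<Rightarrow> 'a set list \<Rightarrow> bool" where
  "facet_cycle F w \<longleftrightarrow>
     (let m = length w in
       m > 0 \<and> even m \<and>
       (\<forall>i<m. lattice_arc F (w ! i) (w ! ((i + 1) mod m))) \<and>
       (\<forall>i<m. even i \<longrightarrow> is_vertex_node F (w ! i)) \<and>
       (\<forall>i<m. odd i \<longrightarrow> w ! i \<in> F) \<and>
       (\<forall>f\<in>F. card {i. i < m \<and> odd i \<and> w ! i = f} = 1) \<and>
       (\<forall>i<m. even i \<longrightarrow> w ! i \<noteq> w ! ((i + 2) mod m)))"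

end

theory Submission
  imports Defs
begin

(*
  The facet cycle is grown one facet at a time, starting from the walk a f b g a around two
  facets f, g sharing the edge {a, b}. A facet h outside the current cycle that shares an edge
  with a facet K of the cycle can be spliced in next to K, unless the cycle crosses K exactly
  along that edge; two facets h, K outside the cycle sharing an edge {p, q}, with p visited,
  can be inserted as the detour p h q K p.

  Otherwise take g outside the cycle adjacent to it (connectivity) and a longest chain
  g = c0, c1, ..., ck of facets of the cycle in which each c(i+1) is crossed along an edge of
  c(i). Moving c(i) into the slot of c(i+1), for all i, gives a cycle that contains g but not
  ck. Since every edge lies in exactly two facets, maximality of the chain leaves the
  neighbour of ck across one of its edges in one of the two insertable situations above, so
  ck returns and the cycle has grown.
*)

(*
  A closed walk v f1 u1 f2 u2 ... fn un with un = v is encoded as v together with the list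
  [(f1, u1), ..., (fn, un)]; steps lists its triples (entry vertex, facet, exit vertex).
*)
fun steps :: "'a \<Rightarrow> ('a set \<times> 'a) list \<Rightarrow> ('a \<times> 'a set \<times> 'a) list" where
  "steps v [] = []"
| "steps v ((f, u) # xs) = (v, f, u) # steps u xs"

definition proper_steps :: "'a \<Rightarrow> ('a set \<times> 'a) list \<Rightarrow> bool" where
  "proper_steps v xs \<longleftrightarrow> (\<forall>(a, f, b) \<in> set (steps v xs). a \<in> f \<and> b \<in> f \<and> a \<noteq> b)"

definition facet_tour :: "'a set set \<Rightarrow> 'a \<Rightarrow> ('a set \<times> 'a) list \<Rightarrow> bool" where
  "facet_tour S v xs \<longleftrightarrow>
     xs \<noteq> [] \<and> snd (last xs) = v \<and> distinct (map fst xs) \<and> fst ` set xs = S \<and> proper_steps v xs"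

lemma steps_append: "steps v (ys @ zs) = steps v ys @ steps (last (v # map snd ys)) zs"
  by (induction v ys rule: steps.induct) auto

lemma length_steps [simp]: "length (steps v xs) = length xs"
  by (induction v xs rule: steps.induct) auto

lemma nth_steps: "j < length xs \<Longrightarrow> steps v xs ! j = ((v # map snd xs) ! j, fst (xs ! j), snd (xs ! j))"
  by (induction v xs arbitrary: j rule: steps.induct) (auto simp: nth_Cons split: nat.split)

lemma steps_memD: "(a, f, b) \<in> set (steps v xs) \<Longrightarrow> f \<in> fst ` set xs \<and> b \<in> snd ` set xs"
  by (induction v xs rule: steps.induct) force+

lemma steps_facet_ex: "f \<in> fst ` set xs \<Longrightarrow> \<exists>a b. (a, f, b) \<in> set (steps v xs)"
  by (induction v xs rule: steps.induct) force+

lemma steps_facet_unique: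
  "distinct (map fst xs) \<Longrightarrow> (a, f, b) \<in> set (steps v xs) \<Longrightarrow> (a', f, b') \<in> set (steps v xs)
    \<Longrightarrow> a = a' \<and> b = b'"
  by (induction v xs rule: steps.induct) (auto dest: steps_memD)

lemma steps_split:
  "(a, f, b) \<in> set (steps v xs) \<Longrightarrow> \<exists>ys zs. xs = ys @ (f, b) # zs \<and> last (v # map snd ys) = a"
proof (induction v xs rule: steps.induct)
  case (2 v g u xs)
  show ?case
  proof (cases "(a, f, b) = (v, g, u)")
    case True
    then show ?thesis by (intro exI[of _ "[]"] exI[of _ xs]) auto
  next
    case False
    with 2 obtain ys zs where "xs = ys @ (f, b) # zs" "last (u # map snd ys) = a" by auto
    then show ?thesis by (intro exI[of _ "(g, u) # ys"] exI[of _ zs]) auto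
  qed
qed simp

lemma steps_map_apfst: "steps v (map (apfst \<sigma>) xs) = map (\<lambda>(a, f, b). (a, \<sigma> f, b)) (steps v xs)"
  by (induction v xs rule: steps.induct) auto

lemma facet_tour_splice:
  assumes tour: "facet_tour S v (ys @ (K, b) # zs)"
    and ms: "ms \<noteq> []" "proper_steps (last (v # map snd ys)) ms" "snd (last ms) = b"
      "distinct (map fst ms)" "fst ` set ms \<inter> (S - {K}) = {}"
    and S': "S' = S - {K} \<union> fst ` set ms"
  shows "facet_tour S' v (ys @ ms @ zs)"
proof -
  let ?a = "last (v # map snd ys)"
  have last_ms: "last (?a # map snd ms) = b"
    using ms(1,3) by (simp add: last_map)
  have dist: "distinct (map fst ys @ K # map fst zs)" and facets: "S = fst ` set ys \<union> {K} \<union> fst ` set zs"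
    and proper: "proper_steps v ys" "proper_steps b zs"
    and closed: "snd (last ((K, b) # zs)) = v"
    using tour by (auto simp: facet_tour_def proper_steps_def steps_append)
  have rest: "S - {K} = fst ` set ys \<union> fst ` set zs"
    using dist facets by auto
  have "distinct (map fst (ys @ ms @ zs))"
    using dist ms(4,5) unfolding rest by (auto simp: disjoint_iff)
  moreover have "fst ` set (ys @ ms @ zs) = S'"
    unfolding S' rest by auto
  moreover have "snd (last (ys @ ms @ zs)) = v"
    using ms(1,3) closed by (cases zs) auto
  moreover have "steps v (ys @ ms @ zs) = steps v ys @ steps ?a ms @ steps b zs"
    using last_ms by (simp add: steps_append)
  then have "proper_steps v (ys @ ms @ zs)"
    using proper ms(2) by (auto simp: proper_steps_def)
  ultimately show ?thesis
    using ms(1) by (simp add: facet_tour_def)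
qed

lemma card_3_third_element:
  assumes "card K = 3" "a \<in> K" "b \<in> K" "a \<noteq> b"
  obtains p where "K = {a, b, p}" "p \<noteq> a" "p \<noteq> b"
proof -
  have "card (K - {a, b}) = 1"
    using assms by (simp add: card_Diff_subset)
  then obtain p where "K - {a, b} = {p}"
    by (rule card_1_singletonE)
  then show ?thesis
    using that assms by blast
qed

lemma card_2_subset_triple:
  assumes "E \<subseteq> {a, b, p}" "card E = 2" "E \<noteq> {a, b}"
  shows "E = {a, p} \<or> E = {b, p}"
proof -
  obtain x y where "E = {x, y}" "x \<noteq> y"
    using assms(2) card_2_iff by metis
  then show ?thesis
    using assms(1,3) by auto
qed

lemma simplicial_surface_card_facet: "simplicial_surface F \<Longrightarrow> f \<in> F \<Longrightarrow> card f = 3"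
  by (simp add: simplicial_surface_def)

lemma simplicial_surface_card_edge_facets:
  "simplicial_surface F \<Longrightarrow> f \<in> F \<Longrightarrow> e \<subseteq> f \<Longrightarrow> card e = 2 \<Longrightarrow> card {K \<in> F. e \<subseteq> K} = 2"
  unfolding simplicial_surface_def poly_edges_def by blast

lemma simplicial_surface_other_facet:
  assumes "simplicial_surface F" "f \<in> F" "e \<subseteq> f" "card e = 2"
  obtains K where "K \<in> F" "e \<subseteq> K" "K \<noteq> f"
proof -
  have "{K \<in> F. e \<subseteq> K} \<noteq> {f}"
    using simplicial_surface_card_edge_facets[OF assms] by auto
  then show thesis
    using that assms(2,3) by blast
qed

lemma simplicial_surface_edge_facets_eq:
  assumes surf: "simplicial_surface F" and K: "K1 \<in> F" "K2 \<in> F" "K3 \<in> F"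
    and e: "e \<subseteq> K1" "e \<subseteq> K2" "e \<subseteq> K3" "card e = 2"
  shows "K1 = K2 \<or> K1 = K3 \<or> K2 = K3"
proof (rule ccontr)
  assume "\<not> ?thesis"
  then have "card {K1, K2, K3} = 3"
    by auto
  moreover have "{K1, K2, K3} \<subseteq> {K \<in> F. e \<subseteq> K}" "finite F"
    using K e surf by (auto simp: simplicial_surface_def)
  ultimately have "3 \<le> card {K \<in> F. e \<subseteq> K}"
    using card_mono[of "{K \<in> F. e \<subseteq> K}" "{K1, K2, K3}"] by simp
  then show False
    using simplicial_surface_card_edge_facets[OF surf K(1) e(1,4)] by simp
qed

lemma simplicial_surface_adjacent_across:
  assumes surf: "simplicial_surface F" and S: "S \<subseteq> F" "S \<noteq> {}" "S \<noteq> F"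
  obtains f g where "f \<in> S" "g \<in> F" "g \<notin> S" "card (f \<inter> g) = 2"
proof -
  obtain f0 g0 where "f0 \<in> S" "g0 \<in> F" "g0 \<notin> S"
    using S by blast
  then have "(f0, g0) \<in> (facet_adj F)\<^sup>*"
    using surf S(1) by (auto simp: simplicial_surface_def)
  then have "\<exists>f g. (f, g) \<in> facet_adj F \<and> f \<in> S \<and> g \<notin> S"
    using \<open>f0 \<in> S\<close> \<open>g0 \<notin> S\<close> by (induction rule: rtrancl_induct) auto
  then show thesis
    using that by (auto simp: facet_adj_def)
qed

lemma facet_tour_insert_across_edge:
  assumes tour: "facet_tour S v xs" and "h \<notin> S"
    and K: "(a, K, b) \<in> set (steps v xs)" "card K = 3"
    and E: "E \<subseteq> K" "E \<subseteq> h" "card E = 2" and not_along: "\<not> (a \<in> h \<and> b \<in> h)"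
  shows "\<exists>xs'. facet_tour (insert h S) v xs'"
proof -
  obtain ys zs where xs: "xs = ys @ (K, b) # zs" and a: "last (v # map snd ys) = a"
    using steps_split[OF K(1)] by blast
  have "K \<in> S" "a \<in> K" "b \<in> K" "a \<noteq> b"
    using tour K(1) steps_memD[OF K(1)] by (auto simp: facet_tour_def proper_steps_def)
  then obtain p where p: "K = {a, b, p}" "p \<noteq> a" "p \<noteq> b"
    using K(2) by (elim card_3_third_element)
  have "E \<noteq> {a, b}"
    using E(2) not_along by auto
  (* the crossing a K b becomes a K p h b or a h p K b *)
  then consider "E = {b, p}" | "E = {a, p}"
    using card_2_subset_triple[of E a b p] E(1,3) p(1) by blast
  then show ?thesis
  proof cases
    case 1
    have "proper_steps (last (v # map snd ys)) [(K, p), (h, b)]"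
      unfolding a
      using 1 E(2) p \<open>a \<in> K\<close> \<open>a \<noteq> b\<close> by (auto simp: proper_steps_def)
    then have "facet_tour (insert h S) v (ys @ [(K, p), (h, b)] @ zs)"
      using \<open>h \<notin> S\<close> \<open>K \<in> S\<close> p
      by (intro facet_tour_splice[OF tour[unfolded xs]]) auto
    then show ?thesis ..
  next
    case 2
    have "proper_steps (last (v # map snd ys)) [(h, p), (K, b)]"
      unfolding a
      using 2 E(2) p \<open>b \<in> K\<close> \<open>a \<noteq> b\<close> by (auto simp: proper_steps_def)
    then have "facet_tour (insert h S) v (ys @ [(h, p), (K, b)] @ zs)"
      using \<open>h \<notin> S\<close> \<open>K \<in> S\<close> p
      by (intro facet_tour_splice[OF tour[unfolded xs]]) auto
    then show ?thesis ..
  qed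
qed

lemma facet_tour_insert_pair:
  assumes tour: "facet_tour S v xs" and new: "h \<notin> S" "K \<notin> S" "h \<noteq> K"
    and pq: "p \<in> h" "q \<in> h" "p \<in> K" "q \<in> K" "p \<noteq> q" and "p \<in> snd ` set xs"
  shows "\<exists>xs'. facet_tour (insert h (insert K S)) v xs'"
proof -
  obtain X where "(X, p) \<in> set xs"
    using \<open>p \<in> snd ` set xs\<close> by auto
  then obtain ys zs where xs: "xs = ys @ (X, p) # zs"
    by (meson split_list)
  define a where "a = last (v # map snd ys)"
  have "(a, X, p) \<in> set (steps v xs)"
    by (simp add: xs steps_append a_def)
  then have "X \<in> S" "a \<in> X" "p \<in> X" "a \<noteq> p"
    using tour steps_memD[of a X p v xs] by (auto simp: facet_tour_def proper_steps_def)
  then have "proper_steps (last (v # map snd ys)) [(X, p), (h, q), (K, p)]"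
    unfolding a_def[symmetric] using pq by (auto simp: proper_steps_def)
  then have "facet_tour (insert h (insert K S)) v (ys @ [(X, p), (h, q), (K, p)] @ zs)"
    using new pq \<open>X \<in> S\<close>
    by (intro facet_tour_splice[OF tour[unfolded xs]]) auto
  then show ?thesis ..
qed

lemma facet_tour_edge_visited:
  assumes tour: "facet_tour S v xs" and f: "f \<in> S" "card f = 3" and e: "e \<subseteq> f" "card e = 2"
  shows "e \<inter> snd ` set xs \<noteq> {}"
proof -
  obtain a b where step: "(a, f, b) \<in> set (steps v xs)"
    using tour f(1) steps_facet_ex[of f xs v] by (auto simp: facet_tour_def)
  then have "a \<in> f" "b \<in> f" "a \<noteq> b"
    using tour by (auto simp: facet_tour_def proper_steps_def)
  then obtain p where p: "f = {a, b, p}" "p \<noteq> a" "p \<noteq> b"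
    using f(2) by (elim card_3_third_element)
  have "e \<inter> {a, b} \<noteq> {}"
    using card_2_subset_triple[of e a b p] e p(1) by auto
  moreover have "a \<in> snd ` set xs"
  proof -
    obtain ys zs where "xs = ys @ (f, b) # zs" "last (v # map snd ys) = a"
      using steps_split[OF step] by blast
    then show ?thesis
      using tour last_in_set[of xs] by (cases ys rule: rev_cases) (auto simp: facet_tour_def)
  qed
  moreover have "b \<in> snd ` set xs"
    using steps_memD[OF step] by blast
  ultimately show ?thesis
    by blast
qed

definition traversed_along :: "'a \<Rightarrow> ('a set \<times> 'a) list \<Rightarrow> 'a set \<Rightarrow> 'a set \<Rightarrow> bool" where
  "traversed_along v xs h K \<longleftrightarrow> (\<exists>a b. (a, K, b) \<in> set (steps v xs) \<and> a \<in> h \<and> b \<in> h)"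

lemma facet_tour_insert_facet:
  assumes surf: "simplicial_surface F" and tour: "facet_tour S v xs" "S \<subseteq> F"
    and t: "t \<in> F" "t \<notin> S" and e: "e \<subseteq> t" "card e = 2" "e \<inter> snd ` set xs \<noteq> {}"
    and not_along: "\<And>K. K \<in> S \<Longrightarrow> e \<subseteq> K \<Longrightarrow> \<not> traversed_along v xs t K"
  shows "\<exists>S' xs'. facet_tour S' v xs' \<and> insert t S \<subseteq> S' \<and> S' \<subseteq> F"
proof -
  obtain K where K: "K \<in> F" "e \<subseteq> K" "K \<noteq> t"
    using simplicial_surface_other_facet[OF surf t(1) e(1,2)] by blast
  show ?thesis
  proof (cases "K \<in> S")
    case True
    then obtain a b where step: "(a, K, b) \<in> set (steps v xs)"
      using tour(1) steps_facet_ex[of K xs v] by (auto simp: facet_tour_def)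
    then have "\<not> (a \<in> t \<and> b \<in> t)"
      using not_along[OF True K(2)] by (auto simp: traversed_along_def)
    then obtain xs' where "facet_tour (insert t S) v xs'"
      using facet_tour_insert_across_edge[OF tour(1) t(2) step _ K(2) e(1,2)]
        simplicial_surface_card_facet[OF surf K(1)] by blast
    then show ?thesis
      using tour(2) t(1) by blast
  next
    case False
    obtain p q where "e = {p, q}" "p \<noteq> q" "p \<in> snd ` set xs"
      using e(2,3) by (auto simp: card_2_iff)
    then obtain xs' where "facet_tour (insert t (insert K S)) v xs'"
      using facet_tour_insert_pair[OF tour(1) t(2) False K(3)[symmetric]] e(1) K(2) by auto
    then show ?thesis
      using tour(2) t(1) K(1) by blast
  qed
qed

fun shift :: "'a \<Rightarrow> 'a list \<Rightarrow> 'a \<Rightarrow> 'a" where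
  "shift g [] x = x"
| "shift g (c # cs) x = (if x = c then g else shift c cs x)"

lemma shift_notin: "x \<notin> set cs \<Longrightarrow> shift g cs x = x"
  by (induction g cs x rule: shift.induct) auto

lemma shift_neq: "distinct (g # cs) \<Longrightarrow> x \<in> set cs \<Longrightarrow> shift g cs x \<noteq> x"
  by (induction g cs x rule: shift.induct) auto

lemma shift_successively: "successively R (g # cs) \<Longrightarrow> x \<in> set cs \<Longrightarrow> R (shift g cs x) x"
  by (induction g cs x rule: shift.induct) (auto simp: successively_Cons)

lemma shift_image:
  "distinct (g # cs) \<Longrightarrow> set cs \<subseteq> T \<Longrightarrow> g \<notin> T \<Longrightarrow> shift g cs ` T = insert g T - {last (g # cs)}"
proof (induction cs arbitrary: g T)
  case (Cons c cs)
  have "c \<in> T" "last (c # cs) \<in> T"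
    using Cons.prems(2) last_in_set[of "c # cs"] by auto
  have "shift g (c # cs) ` T = insert g (shift c cs ` (T - {c}))"
    using \<open>c \<in> T\<close> by (auto simp: image_iff)
  also have "shift c cs ` (T - {c}) = T - {last (c # cs)}"
    using Cons.prems \<open>c \<in> T\<close> by (subst Cons.IH) auto
  finally show ?case
    using Cons.prems(3) \<open>last (c # cs) \<in> T\<close> by auto
qed simp

lemma maximal_chain_exists:
  assumes "finite S"
  obtains cs where "successively R (g # cs)" "distinct cs" "set cs \<subseteq> S"
    "\<And>x. x \<in> S \<Longrightarrow> x \<notin> set cs \<Longrightarrow> \<not> R (last (g # cs)) x"
proof -
  let ?chain = "\<lambda>cs. successively R (g # cs) \<and> distinct cs \<and> set cs \<subseteq> S"
  have "length cs < Suc (card S)" if "?chain cs" for cs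
    using that assms by (metis card_mono distinct_card le_imp_less_Suc)
  then obtain cs where cs: "?chain cs" and longest: "\<And>ys. ?chain ys \<Longrightarrow> length ys \<le> length cs"
    using ex_has_greatest_nat[of ?chain "[]" length "Suc (card S)"] by auto
  show thesis
  proof (rule that)
    fix x assume x: "x \<in> S" "x \<notin> set cs"
    show "\<not> R (last (g # cs)) x"
    proof
      assume "R (last (g # cs)) x"
      then have "?chain (cs @ [x])"
        using cs x successively_append_iff[of R "g # cs" "[x]"] by auto
      then show False
        using longest[of "cs @ [x]"] by simp
    qed
  qed (use cs in auto)
qed

lemma facet_tour_shift:
  assumes tour: "facet_tour S v xs"
    and chain: "successively (traversed_along v xs) (g # cs)" "distinct (g # cs)" "set cs \<subseteq> S" "g \<notin> S"
  shows "facet_tour (insert g S - {last (g # cs)}) v (map (apfst (shift g cs)) xs)"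
proof -
  define t where "t = last (g # cs)"
  let ?\<sigma> = "shift g cs" and ?xs' = "map (apfst (shift g cs)) xs"
  have S: "S = fst ` set xs" "finite S"
    using tour by (auto simp: facet_tour_def)
  have "a \<in> ?\<sigma> f \<and> b \<in> ?\<sigma> f \<and> a \<noteq> b" if step: "(a, f, b) \<in> set (steps v xs)" for a f b
  proof (cases "f \<in> set cs")
    case True
    then obtain a' b' where "(a', f, b') \<in> set (steps v xs)" "a' \<in> ?\<sigma> f" "b' \<in> ?\<sigma> f"
      using shift_successively[OF chain(1) True] by (auto simp: traversed_along_def)
    moreover have "distinct (map fst xs)" "a \<noteq> b"
      using step tour by (auto simp: facet_tour_def proper_steps_def)
    ultimately show ?thesis
      using steps_facet_unique[OF _ step] by blast
  next
    case False
    then show ?thesis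
      using step tour by (auto simp: shift_notin facet_tour_def proper_steps_def)
  qed
  then have "proper_steps v ?xs'"
    by (auto simp: proper_steps_def steps_map_apfst)
  moreover have facets: "set (map fst ?xs') = insert g S - {t}"
    unfolding t_def using chain(2-4) shift_image[of g cs S] S(1) by (simp add: image_image)
  moreover have "distinct (map fst ?xs')"
  proof (rule card_distinct)
    have "t \<in> insert g S"
      unfolding t_def using chain(3) last_in_set[of "g # cs"] by auto
    then have "card (insert g S - {t}) = card S"
      using S(2) chain(4) by simp
    also have "\<dots> = length xs"
      using tour distinct_card[of "map fst xs"] by (simp add: facet_tour_def)
    finally show "card (set (map fst ?xs')) = length (map fst ?xs')"
      unfolding facets length_map .
  qed
  moreover have "snd (last ?xs') = v"
    using tour by (auto simp: facet_tour_def last_map)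
  ultimately show ?thesis
    using tour unfolding t_def[symmetric] by (simp add: facet_tour_def image_image)
qed

context
  fixes F :: "'a set set" and S v xs g cs
  assumes surf: "simplicial_surface F" and tour: "facet_tour S v xs" "S \<subseteq> F" and g: "g \<in> F" "g \<notin> S"
    and chain: "successively (traversed_along v xs) (g # cs)" "distinct (g # cs)" "set cs \<subseteq> S" "cs \<noteq> []"
    and maximal: "\<And>x. x \<in> S \<Longrightarrow> x \<notin> set cs \<Longrightarrow> \<not> traversed_along v xs (last cs) x"
begin

lemma shifted_facet_tour: "facet_tour (insert g S - {last cs}) v (map (apfst (shift g cs)) xs)"
  using facet_tour_shift[OF tour(1) chain(1-3) g(2)] chain(4) by simp

lemma shifted_tour_not_along:
  assumes step_t: "(at, last cs, bt) \<in> set (steps v xs)" and t: "last cs = {at, bt, r}"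
    and K: "K \<in> insert g S - {last cs}" "{bt, r} \<subseteq> K"
  shows "\<not> traversed_along v (map (apfst (shift g cs)) xs) (last cs) K"
proof
  let ?t = "last cs" and ?xs' = "map (apfst (shift g cs)) xs"
  assume "traversed_along v ?xs' ?t K"
  then obtain a b where stepK: "(a, K, b) \<in> set (steps v ?xs')" "a \<in> ?t" "b \<in> ?t"
    by (auto simp: traversed_along_def)
  then obtain x where step: "(a, x, b) \<in> set (steps v xs)" "K = shift g cs x"
    by (auto simp: steps_map_apfst)
  have "x \<in> S" "a \<in> x" "b \<in> x" "a \<noteq> b"
    using tour(1) step(1) steps_memD[OF step(1)] by (auto simp: facet_tour_def proper_steps_def)
  have "a \<in> K" "b \<in> K"
    using shifted_facet_tour stepK(1) unfolding facet_tour_def proper_steps_def by fast+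
  have "K \<in> F" "x \<in> F"
    using K(1) \<open>x \<in> S\<close> tour(2) g(1) by auto
  have "?t \<in> F"
    using chain(3,4) last_in_set[of cs] tour(2) by blast
  (* K occupies the slot of x; x outside the chain contradicts maximality, x = ?t would put
     ?t inside K, and any other x is a third facet on the edge {a, b} of ?t and K. *)
  consider "x \<notin> set cs" | "x = ?t" | "x \<in> set cs" "x \<noteq> ?t"
    by blast
  then show False
  proof cases
    case 1
    then show False
      using maximal[OF \<open>x \<in> S\<close> 1] step stepK(2,3) by (auto simp: shift_notin traversed_along_def)
  next
    case 2
    then have "a = at"
      using tour(1) steps_facet_unique[OF _ step(1)[unfolded 2] step_t] by (simp add: facet_tour_def)
    then have "?t \<subseteq> K"
      unfolding t using K(2) \<open>a \<in> K\<close> by simp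
    moreover have "card K = 3" "card ?t = 3"
      using \<open>K \<in> F\<close> \<open>?t \<in> F\<close> simplicial_surface_card_facet[OF surf] by blast+
    ultimately show False
      using K(1) card_subset_eq[of K ?t] card.infinite[of K] by auto
  next
    case 3
    then have "K \<noteq> x"
      using shift_neq[OF chain(2)] step(2) by auto
    then show False
      using simplicial_surface_edge_facets_eq[OF surf \<open>x \<in> F\<close> \<open>K \<in> F\<close> \<open>?t \<in> F\<close>, of "{a, b}"]
        3 K(1) stepK(2,3) \<open>a \<in> x\<close> \<open>b \<in> x\<close> \<open>a \<in> K\<close> \<open>b \<in> K\<close> \<open>a \<noteq> b\<close> by auto
  qed
qed

lemma facet_tour_extend_along_chain: "\<exists>S' xs'. facet_tour S' v xs' \<and> insert g S \<subseteq> S' \<and> S' \<subseteq> F"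
proof -
  define t where "t = last cs"
  define xs' where "xs' = map (apfst (shift g cs)) xs"
  have "t \<in> S"
    using chain(3,4) last_in_set[of cs] by (auto simp: t_def)
  then have t: "t \<in> S" "t \<in> F"
    using tour(2) by auto
  have tour': "facet_tour (insert g S - {t}) v xs'"
    unfolding t_def xs'_def by (rule shifted_facet_tour)
  obtain at bt where step_t: "(at, t, bt) \<in> set (steps v xs)"
    using tour(1) t(1) steps_facet_ex[of t xs v] by (auto simp: facet_tour_def)
  then have "at \<in> t" "bt \<in> t" "at \<noteq> bt"
    using tour(1) by (auto simp: facet_tour_def proper_steps_def)
  moreover have "card t = 3"
    using simplicial_surface_card_facet[OF surf t(2)] .
  ultimately obtain r where r: "t = {at, bt, r}" "r \<noteq> at" "r \<noteq> bt"
    by (elim card_3_third_element)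
  have visited: "{bt, r} \<inter> snd ` set xs' \<noteq> {}"
    using steps_memD[OF step_t] by (simp add: xs'_def image_image)
  have edge: "insert g S - {t} \<subseteq> F" "t \<notin> insert g S - {t}" "{bt, r} \<subseteq> t" "card {bt, r} = 2"
    using tour(2) g(1) r by auto
  obtain S' xs'' where "facet_tour S' v xs''" "insert t (insert g S - {t}) \<subseteq> S'" "S' \<subseteq> F"
    using facet_tour_insert_facet[OF surf tour' edge(1) t(2) edge(2-4) visited
        shifted_tour_not_along[OF step_t[unfolded t_def] r(1)[unfolded t_def], folded t_def xs'_def]]
    by blast
  moreover have "insert t (insert g S - {t}) = insert g S"
    using t(1) by auto
  ultimately show ?thesis
    by auto
qed

end

lemma facet_tour_grow:
  assumes surf: "simplicial_surface F" and tour: "facet_tour S v xs" "S \<subseteq> F" "S \<noteq> F"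
  shows "\<exists>S' xs'. facet_tour S' v xs' \<and> S \<subset> S' \<and> S' \<subseteq> F"
proof -
  have "S \<noteq> {}" "finite S"
    using tour(1) by (auto simp: facet_tour_def)
  then obtain f g where fg: "f \<in> S" "g \<in> F" "g \<notin> S" "card (f \<inter> g) = 2"
    using simplicial_surface_adjacent_across[OF surf tour(2)] tour(3) by blast
  obtain cs where chain: "successively (traversed_along v xs) (g # cs)" "distinct cs" "set cs \<subseteq> S"
    and maximal: "\<And>x. x \<in> S \<Longrightarrow> x \<notin> set cs \<Longrightarrow> \<not> traversed_along v xs (last (g # cs)) x"
    using maximal_chain_exists[OF \<open>finite S\<close>] by blast
  have "\<exists>S' xs'. facet_tour S' v xs' \<and> insert g S \<subseteq> S' \<and> S' \<subseteq> F"
  proof (cases "cs = []")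
    case True
    have "card f = 3"
      using simplicial_surface_card_facet[OF surf] fg(1) tour(2) by blast
    then have "(f \<inter> g) \<inter> snd ` set xs \<noteq> {}"
      using facet_tour_edge_visited[OF tour(1) fg(1)] fg(4) by blast
    then show ?thesis
      using facet_tour_insert_facet[OF surf tour(1,2) fg(2,3) _ fg(4)] maximal True by auto
  next
    case False
    have "distinct (g # cs)"
      using chain(2,3) fg(3) by auto
    moreover have "\<And>x. x \<in> S \<Longrightarrow> x \<notin> set cs \<Longrightarrow> \<not> traversed_along v xs (last cs) x"
      using maximal False by simp
    ultimately show ?thesis
      using facet_tour_extend_along_chain[OF surf tour(1,2) fg(2,3) chain(1) _ chain(3) False] by blast
  qed
  then show ?thesis
    using fg(3) by blast
qed

lemma facet_tour_complete:
  assumes surf: "simplicial_surface F" and "facet_tour S v xs" "S \<subseteq> F"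
  shows "\<exists>xs. facet_tour F v xs"
  using assms(2,3)
proof (induction "card F - card S" arbitrary: S xs rule: less_induct)
  case less
  show ?case
  proof (cases "S = F")
    case True
    then show ?thesis
      using less.prems by blast
  next
    case False
    then obtain S' xs' where "facet_tour S' v xs'" "S \<subset> S'" "S' \<subseteq> F"
      using facet_tour_grow[OF surf less.prems] by blast
    moreover have "finite F"
      using surf by (simp add: simplicial_surface_def)
    then have "card F - card S' < card F - card S"
      using \<open>S \<subset> S'\<close> \<open>S' \<subseteq> F\<close> psubset_card_mono[of S' S] card_mono[of F S'] finite_subset[of S' F]
      by auto
    ultimately show ?thesis
      using less.hyps by blast
  qed
qed

lemma simplicial_surface_facet_tour_exists:
  assumes surf: "simplicial_surface F"
  shows "\<exists>S v xs. facet_tour S v xs \<and> S \<subseteq> F"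
proof -
  obtain f where f: "f \<in> F"
    using surf by (auto simp: simplicial_surface_def)
  then obtain a b p where "f = {a, b, p}" "a \<noteq> b"
    using simplicial_surface_card_facet[OF surf] card_3_iff by metis
  then obtain g where "g \<in> F" "{a, b} \<subseteq> g" "g \<noteq> f"
    using simplicial_surface_other_facet[OF surf f, of "{a, b}"] by auto
  then have "facet_tour {f, g} a [(f, b), (g, a)]"
    using \<open>f = {a, b, p}\<close> \<open>a \<noteq> b\<close> by (auto simp: facet_tour_def proper_steps_def)
  then show ?thesis
    using f \<open>g \<in> F\<close> by blast
qed

lemma lattice_arc_vertex_facet:
  assumes "f \<in> F" "a \<in> f" "b \<in> f" "a \<noteq> b"
  shows "lattice_arc F {a} f" "lattice_arc F f {a}"
proof -
  have "{a} \<in> lattice_nodes F" "f \<in> lattice_nodes F"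
    using assms(1,2) unfolding lattice_nodes_def poly_vertices_def by blast+
  moreover have "{a} \<subset> f"
    using assms(2-4) by blast
  ultimately show "lattice_arc F {a} f" "lattice_arc F f {a}"
    unfolding lattice_arc_def by blast+
qed

definition vertex_facet_word :: "nat \<Rightarrow> (nat \<Rightarrow> 'a) \<Rightarrow> (nat \<Rightarrow> 'a set) \<Rightarrow> 'a set list" where
  "vertex_facet_word n \<alpha> \<phi> = map (\<lambda>i. if even i then {\<alpha> (i div 2)} else \<phi> (i div 2)) [0..<2 * n]"

lemma length_vertex_facet_word [simp]: "length (vertex_facet_word n \<alpha> \<phi>) = 2 * n"
  by (simp add: vertex_facet_word_def)

lemma vertex_facet_word_nth:
  assumes "j < n"
  shows "vertex_facet_word n \<alpha> \<phi> ! (2 * j) = {\<alpha> j}"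
    and "vertex_facet_word n \<alpha> \<phi> ! (2 * j + 1) = \<phi> j"
    and "vertex_facet_word n \<alpha> \<phi> ! ((2 * j + 2) mod (2 * n)) = {\<alpha> (Suc j mod n)}"
proof -
  show "vertex_facet_word n \<alpha> \<phi> ! (2 * j) = {\<alpha> j}" "vertex_facet_word n \<alpha> \<phi> ! (2 * j + 1) = \<phi> j"
    using assms by (simp_all add: vertex_facet_word_def)
  have "(2 * j + 2) mod (2 * n) = 2 * (Suc j mod n)"
    using mult_mod_right[of 2 "Suc j" n] by simp
  moreover have "Suc j mod n < n"
    using assms by simp
  ultimately show "vertex_facet_word n \<alpha> \<phi> ! ((2 * j + 2) mod (2 * n)) = {\<alpha> (Suc j mod n)}"
    by (simp add: vertex_facet_word_def)
qed

lemma vertex_facet_word_facet_once: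
  assumes facets: "bij_betw \<phi> {..<n} F" and "f \<in> F"
  shows "card {i. i < 2 * n \<and> odd i \<and> vertex_facet_word n \<alpha> \<phi> ! i = f} = 1"
proof -
  obtain j0 where j0: "j0 < n" "\<phi> j0 = f"
    using assms by (auto simp: bij_betw_def)
  have "{i. i < 2 * n \<and> odd i \<and> vertex_facet_word n \<alpha> \<phi> ! i = f} = {2 * j0 + 1}"
  proof (intro set_eqI iffI)
    fix i assume i: "i \<in> {i. i < 2 * n \<and> odd i \<and> vertex_facet_word n \<alpha> \<phi> ! i = f}"
    then obtain j where j: "j < n" "i = 2 * j + 1"
      by (auto elim!: oddE)
    then have "\<phi> j = \<phi> j0"
      using vertex_facet_word_nth(2)[OF j(1), of \<alpha> \<phi>] i j0 by simp
    then have "j = j0"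
      using facets j(1) j0(1) by (auto simp: bij_betw_def inj_on_def)
    then show "i \<in> {2 * j0 + 1}"
      using j(2) by simp
  qed (use j0 vertex_facet_word_nth(2)[OF j0(1), of \<alpha> \<phi>] in auto)
  then show ?thesis
    by simp
qed

lemma facet_cycleI:
  assumes "n > 0"
    and vertices: "\<And>j. j < n \<Longrightarrow> \<alpha> j \<in> \<phi> j \<and> \<alpha> (Suc j mod n) \<in> \<phi> j \<and> \<alpha> j \<noteq> \<alpha> (Suc j mod n)"
    and facets: "bij_betw \<phi> {..<n} F"
  shows "facet_cycle F (vertex_facet_word n \<alpha> \<phi>)"
proof -
  let ?w = "vertex_facet_word n \<alpha> \<phi>"
  have \<phi>F: "\<phi> j \<in> F" if "j < n" for j
    using facets that by (auto simp: bij_betw_def)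
  have arc: "lattice_arc F (?w ! i) (?w ! ((i + 1) mod (2 * n)))" if i: "i < 2 * n" for i
  proof (cases "even i")
    case True
    then obtain j where j: "i = 2 * j" "j < n"
      using i by (auto elim!: evenE)
    then show ?thesis
      using vertex_facet_word_nth[OF j(2), of \<alpha> \<phi>] vertices[OF j(2)] lattice_arc_vertex_facet(1)[OF \<phi>F[OF j(2)], of "\<alpha> j" "\<alpha> (Suc j mod n)"] i
      by simp
  next
    case False
    then obtain j where j: "i = 2 * j + 1" "j < n"
      using i by (auto elim!: oddE)
    then show ?thesis
      using vertex_facet_word_nth[OF j(2), of \<alpha> \<phi>] vertices[OF j(2)] lattice_arc_vertex_facet(2)[OF \<phi>F[OF j(2)], of "\<alpha> (Suc j mod n)" "\<alpha> j"]
      by (auto simp: add.assoc)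
  qed
  have vertex: "is_vertex_node F (?w ! i) \<and> ?w ! i \<noteq> ?w ! ((i + 2) mod (2 * n))"
    if i: "i < 2 * n" "even i" for i
  proof -
    obtain j where j: "i = 2 * j" "j < n"
      using i by (auto elim!: evenE)
    then show ?thesis
      using vertex_facet_word_nth[OF j(2), of \<alpha> \<phi>] vertices[OF j(2)] \<phi>F[OF j(2)]
      by (auto simp: is_vertex_node_def poly_vertices_def)
  qed
  have facet: "?w ! i \<in> F" if i: "i < 2 * n" "odd i" for i
  proof -
    obtain j where j: "i = 2 * j + 1" "j < n"
      using i by (auto elim!: oddE)
    then show ?thesis
      using vertex_facet_word_nth(2)[OF j(2), of \<alpha> \<phi>] \<phi>F[OF j(2)] by simp
  qed
  show ?thesis
    unfolding facet_cycle_def Let_def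
    using \<open>n > 0\<close> arc vertex facet vertex_facet_word_facet_once[OF facets] by simp
qed

lemma facet_cycle_of_tour:
  assumes tour: "facet_tour F v xs"
  shows "\<exists>w. facet_cycle F w"
proof -
  let ?n = "length xs" and ?\<alpha> = "(!) (v # map snd xs)" and ?\<phi> = "(!) (map fst xs)"
  have next_vertex: "?\<alpha> (Suc j mod ?n) = snd (xs ! j)" if j: "j < ?n" for j
  proof (cases "Suc j < ?n")
    case True
    then show ?thesis
      by simp
  next
    case False
    then have "j = ?n - 1"
      using j by simp
    then show ?thesis
      using tour last_conv_nth[of xs] by (auto simp: facet_tour_def)
  qed
  have "?\<alpha> j \<in> ?\<phi> j \<and> ?\<alpha> (Suc j mod ?n) \<in> ?\<phi> j \<and> ?\<alpha> j \<noteq> ?\<alpha> (Suc j mod ?n)" if j: "j < ?n" for j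
  proof -
    have "steps v xs ! j \<in> set (steps v xs)"
      using j by simp
    then show ?thesis
      using tour nth_steps[OF j, of v] next_vertex[OF j] j by (auto simp: facet_tour_def proper_steps_def)
  qed
  moreover have "bij_betw ?\<phi> {..<?n} F"
    using tour by (intro bij_betw_nth) (auto simp: facet_tour_def)
  moreover have "?n > 0"
    using tour by (simp add: facet_tour_def)
  ultimately have "facet_cycle F (vertex_facet_word ?n ?\<alpha> ?\<phi>)"
    by (intro facet_cycleI) auto
  then show ?thesis ..
qed

theorem theorem3:
  fixes F :: "'a set set"
  assumes "simplicial_polyhedron_genus0 F"
  shows "\<exists>w. facet_cycle F w"
proof -
  have surf: "simplicial_surface F"
    using assms by (simp add: simplicial_polyhedron_genus0_def)
  then obtain S v xs where "facet_tour S v xs" "S \<subseteq> F"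
    using simplicial_surface_facet_tour_exists by blast
  then obtain xs' where "facet_tour F v xs'"
    using facet_tour_complete[OF surf] by blast
  then show ?thesis
    by (rule facet_cycle_of_tour)
qed

end
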